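(* Let $X,Y$ be real Hilbert spaces and $a:X\times Y\to\mathbb{R}\cup\{+\infty\}$ such that for every $y\in Y$ the function $a(\cdot,y)$ is proper and $\Phi_{lsc}$-convex on $X$, and for every $x\in X$ the function $a(x,\cdot)$ is concave on $Y$. Suppose that for every $\beta<\inf_{x\in X}\sup_{y\in Y}a(x,y)$ and every $\varepsilon>0$ there exist $y_1,y_2\in Y$ and $\bar x\in X$ with $\bar x\in\mathrm{dom}\,a(\cdot,y_1)\cap\mathrm{dom}\,a(\cdot,y_2)$, $a(\bar x,y_1)\ge\beta$, $a(\bar x,y_2)\ge\beta$, such that $a(\cdot,y_1)$ and $a(\cdot,y_2)$ satisfy $ZS(\varepsilon,\bar x)$. Then $\sup_{y\in Y}\inf_{x\in X}a(x,y)=\inf_{x\in X}\sup_{y\in Y}a(x,y)$.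
   Context: $\Phi_{lsc}$ is the class of functions $\varphi(x)=-a\|x\|^2+\langle v,x\rangle+c$ ($a\ge0$, $v\in X^*$, $c\in\mathbb{R}$); $\mathrm{supp}(f)=\{\varphi\in\Phi_{lsc}:\varphi\le f\}$; $f$ is $\Phi_{lsc}$-convex if $f=\sup\mathrm{supp}(f)$ pointwise; proper means $\mathrm{supp}(f)\ne\emptyset$ and $\mathrm{dom}(f)\ne\emptyset$. For $\varepsilon\ge0$, $\partial^\varepsilon_{lsc}f(\bar x)$ is the set of $(a,v)\in\mathbb{R}_+\times X^*$ with $f(x)-f(\bar x)\ge\langle v,x-\bar x\rangle-a\|x\|^2+a\|\bar x\|^2-\varepsilon$ for all $x\in X$. Functions $f,g$ satisfy $ZS(\varepsilon,\bar x)$ if $0=(0,0)\in\mathrm{co}(\partial^\varepsilon_{lsc}f(\bar x)\cup\partial^\varepsilon_{lsc}g(\bar x))$, convex hull in $\mathbb{R}\times X^*$. *)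

theory Defs
  imports "HOL-Analysis.Analysis"
begin

text \<open>Functions with values in the extended reals; the paper's range
  \<open>\<real> \<union> {+\<infinity>}\<close> is enforced by separate non-(-\<infinity>) hypotheses.
  The dual \<open>X^*\<close> of the Hilbert space is identified with \<open>X\<close> (Riesz),
  so \<open>\<langle>v,x\<rangle>\<close> is \<open>inner v x\<close>.\<close>

definition phi_lsc :: "('a::real_inner \<Rightarrow> real) set" where
  "phi_lsc = {\<phi>. \<exists>a v c. a \<ge> 0 \<and> \<phi> = (\<lambda>x. - a * (norm x)\<^sup>2 + inner v x + c)}"

definition supp_lsc :: "('a::real_inner \<Rightarrow> ereal) \<Rightarrow> ('a \<Rightarrow> real) set" where
  "supp_lsc f = {\<phi> \<in> phi_lsc. \<forall>x. ereal (\<phi> x) \<le> f x}"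

definition phi_lsc_convex :: "('a::real_inner \<Rightarrow> ereal) \<Rightarrow> bool" where
  "phi_lsc_convex f \<longleftrightarrow> (\<forall>x. f x = (SUP \<phi>\<in>supp_lsc f. ereal (\<phi> x)))"

definition edom :: "('a \<Rightarrow> ereal) \<Rightarrow> 'a set" where
  "edom f = {x. f x < \<infinity>}"

definition proper_lsc :: "('a::real_inner \<Rightarrow> ereal) \<Rightarrow> bool" where
  "proper_lsc f \<longleftrightarrow> supp_lsc f \<noteq> {} \<and> edom f \<noteq> {}"

text \<open>\<open>\<epsilon>\<close>-subdifferential; the defining inequality
  \<open>f x - f xb \<ge> \<langle>v,x-xb\<rangle> - a\<parallel>x\<parallel>\<^sup>2 + a\<parallel>xb\<parallel>\<^sup>2 - \<epsilon>\<close> is written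
  with \<open>f xb\<close> moved to the right-hand side (equivalent for finite \<open>f xb\<close>).\<close>
definition subdiff_lsc :: "real \<Rightarrow> ('a::real_inner \<Rightarrow> ereal) \<Rightarrow> 'a \<Rightarrow> (real \<times> 'a) set" where
  "subdiff_lsc \<epsilon> f xb = {(a, v). a \<ge> 0 \<and>
     (\<forall>x. f x \<ge> f xb + ereal (inner v (x - xb) - a * (norm x)\<^sup>2 + a * (norm xb)\<^sup>2 - \<epsilon>))}"

definition ZS :: "real \<Rightarrow> 'a \<Rightarrow> ('a::real_inner \<Rightarrow> ereal) \<Rightarrow> ('a \<Rightarrow> ereal) \<Rightarrow> bool" where
  "ZS \<epsilon> xb f g \<longleftrightarrow> (0::real, 0::'a) \<in> convex hull (subdiff_lsc \<epsilon> f xb \<union> subdiff_lsc \<epsilon> g xb)"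

definition concave_ereal :: "('b::real_vector \<Rightarrow> ereal) \<Rightarrow> bool" where
  "concave_ereal h \<longleftrightarrow> (\<forall>y1 y2 t. 0 \<le> t \<and> t \<le> 1 \<longrightarrow>
      h ((1 - t) *\<^sub>R y1 + t *\<^sub>R y2) \<ge> ereal (1 - t) * h y1 + ereal t * h y2)"

end

theory Submission
  imports Defs
begin

text \<open>The map \<open>(a, v) \<mapsto> -a\<parallel>x\<parallel>\<^sup>2 + \<langle>v, x\<rangle>\<close> is linear, so the \<open>\<epsilon>\<close>-subgradient inequality
  at \<open>xb\<close> is linear in \<open>(a, v)\<close>. Hence the \<open>\<epsilon>\<close>-subdifferentials are convex, and a
  combination \<open>(1 - t) p + t q = 0\<close> of subgradients of \<open>f\<close> and \<open>g\<close> averages the two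
  inequalities into \<open>(1 - t) f + t g \<ge> (1 - t) f xb + t g xb - \<epsilon>\<close> on all of \<open>X\<close>. For
  \<open>f = a(\<cdot>, y1)\<close>, \<open>g = a(\<cdot>, y2)\<close>, concavity in \<open>y\<close> turns this into
  \<open>inf\<^sub>x a(x, (1 - t) y1 + t y2) \<ge> \<beta> - \<epsilon>\<close> for every \<open>\<beta>\<close> below the upper value,
  which closes the minimax gap.\<close>

lemma convex_hull_Un_convex_cases:
  fixes S T :: "'a::real_vector set"
  assumes "convex S" "convex T" "z \<in> convex hull (S \<union> T)"
  obtains "z \<in> S" | "z \<in> T"
    | u s t where "0 \<le> u" "u \<le> 1" "s \<in> S" "t \<in> T" "z = (1 - u) *\<^sub>R s + u *\<^sub>R t"
proof (cases "S = {} \<or> T = {}")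
  case True
  then show ?thesis
    using assms that(1,2) by (auto simp: hull_same)
next
  case False
  define C where "C b = (if b then T else S)" for b
  have "z \<in> convex hull (\<Union>(C ` UNIV))"
    using assms(3) by (simp add: C_def UNIV_bool Un_commute)
  also have "convex hull (\<Union>(C ` UNIV)) =
      {\<Sum>b\<in>UNIV. c b *\<^sub>R s b | c s. (\<forall>b\<in>UNIV. 0 \<le> c b) \<and> sum c UNIV = 1 \<and> (\<forall>b\<in>UNIV. s b \<in> C b)}"
    using False assms(1,2) by (intro convex_hull_finite_union) (auto simp: C_def)
  finally obtain c s where "0 \<le> c False" "0 \<le> c True" "c False + c True = 1"
      "s False \<in> S" "s True \<in> T" "z = c False *\<^sub>R s False + c True *\<^sub>R s True"
    by (auto simp: UNIV_bool C_def)
  then show ?thesis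
    using that(3)[of "c True" "s False" "s True"] by (auto simp: eq_diff_eq')
qed

text \<open>\<open>\<phi>(x) = -a\<parallel>x\<parallel>\<^sup>2 + \<langle>v,x\<rangle> + c\<close> is \<open>inner (a, v) (phi_lsc_coord x) + c\<close>.\<close>

definition phi_lsc_coord :: "'a::real_inner \<Rightarrow> real \<times> 'a" where
  "phi_lsc_coord x = (- (norm x)\<^sup>2, x)"

lemma subdiff_lsc_iff:
  assumes "f xb = ereal F"
  shows "p \<in> subdiff_lsc \<epsilon> f xb \<longleftrightarrow> 0 \<le> fst p \<and>
    (\<forall>x. ereal (F + inner p (phi_lsc_coord x - phi_lsc_coord xb) - \<epsilon>) \<le> f x)"
  using assms by (cases p) (simp add: subdiff_lsc_def phi_lsc_coord_def algebra_simps)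

lemma convex_subdiff_lsc:
  assumes "f xb = ereal F"
  shows "convex (subdiff_lsc \<epsilon> f xb)"
proof -
  define H where "H x = {p. ereal (F + inner p (phi_lsc_coord x - phi_lsc_coord xb) - \<epsilon>) \<le> f x}" for x
  have "convex (H x)" for x
  proof (cases "f x")
    case (real r)
    then have "H x = {p. inner (phi_lsc_coord x - phi_lsc_coord xb) p \<le> r - F + \<epsilon>}"
      by (auto simp: H_def inner_commute)
    then show ?thesis
      by (simp add: convex_halfspace_le)
  qed (simp_all add: H_def)
  moreover have "subdiff_lsc \<epsilon> f xb = ({0..} \<times> UNIV) \<inter> \<Inter>(range H)"
    using assms by (auto simp: subdiff_lsc_iff H_def)
  moreover have "convex ({0::real..} \<times> (UNIV :: 'a set))"
    by (intro convex_Times) auto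
  ultimately show ?thesis
    by (simp add: convex_INT convex_Int)
qed

lemma subdiff_lsc_zero_imp_ge:
  assumes "f xb = ereal F" "(0, 0) \<in> subdiff_lsc \<epsilon> f xb"
  shows "ereal (F - \<epsilon>) \<le> f x"
  using assms by (simp add: subdiff_lsc_iff zero_prod_def[symmetric])

lemma subdiff_lsc_convex_combination_ge:
  assumes "f xb = ereal F" "g xb = ereal G"
    and "p \<in> subdiff_lsc \<epsilon> f xb" "q \<in> subdiff_lsc \<epsilon> g xb"
    and "0 \<le> t" "t \<le> 1" "(1 - t) *\<^sub>R p + t *\<^sub>R q = 0"
  shows "ereal ((1 - t) * F + t * G - \<epsilon>) \<le> ereal (1 - t) * f x + ereal t * g x"
proof -
  define d where "d = phi_lsc_coord x - phi_lsc_coord xb"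
  have f: "ereal (F + inner p d - \<epsilon>) \<le> f x" and g: "ereal (G + inner q d - \<epsilon>) \<le> g x"
    using assms(1-4) by (simp_all add: subdiff_lsc_iff d_def)
  have "(1 - t) * (F + inner p d - \<epsilon>) + t * (G + inner q d - \<epsilon>)
      = (1 - t) * F + t * G + inner ((1 - t) *\<^sub>R p + t *\<^sub>R q) d - \<epsilon>"
    by (simp add: algebra_simps)
  also have "\<dots> = (1 - t) * F + t * G - \<epsilon>"
    using assms(7) by simp
  finally have "ereal ((1 - t) * F + t * G - \<epsilon>)
      = ereal (1 - t) * ereal (F + inner p d - \<epsilon>) + ereal t * ereal (G + inner q d - \<epsilon>)"
    by simp
  also have "\<dots> \<le> ereal (1 - t) * f x + ereal t * g x"
    using f g assms(5,6) by (intro add_mono ereal_mult_left_mono) auto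
  finally show ?thesis .
qed

lemma ZS_imp_convex_combination_ge:
  assumes "f xb = ereal F" "g xb = ereal G" "ZS \<epsilon> xb f g"
  obtains t where "0 \<le> t" "t \<le> 1"
    "\<And>x. ereal ((1 - t) * F + t * G - \<epsilon>) \<le> ereal (1 - t) * f x + ereal t * g x"
proof -
  have "convex (subdiff_lsc \<epsilon> f xb)" "convex (subdiff_lsc \<epsilon> g xb)"
    using assms(1,2) by (auto intro: convex_subdiff_lsc)
  moreover have "(0, 0) \<in> convex hull (subdiff_lsc \<epsilon> f xb \<union> subdiff_lsc \<epsilon> g xb)"
    using assms(3) by (simp add: ZS_def)
  ultimately show thesis
  proof (rule convex_hull_Un_convex_cases)
    assume "(0, 0) \<in> subdiff_lsc \<epsilon> f xb"
    then show thesis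
      using that[of 0] subdiff_lsc_zero_imp_ge[of f, OF assms(1)] by (simp add: zero_ereal_def[symmetric])
  next
    assume "(0, 0) \<in> subdiff_lsc \<epsilon> g xb"
    then show thesis
      using that[of 1] subdiff_lsc_zero_imp_ge[of g, OF assms(2)] by (simp add: zero_ereal_def[symmetric])
  next
    fix t p q
    assume "0 \<le> t" "t \<le> 1" "p \<in> subdiff_lsc \<epsilon> f xb" "q \<in> subdiff_lsc \<epsilon> g xb"
      "(0, 0) = (1 - t) *\<^sub>R p + t *\<^sub>R q"
    then show thesis
      using that subdiff_lsc_convex_combination_ge[of f xb F g G, OF assms(1,2)] by (simp add: zero_prod_def)
  qed
qed

lemma ereal_le_of_approx_from_below:
  fixes I S :: ereal
  assumes "\<And>\<beta> \<epsilon>. ereal \<beta> < I \<Longrightarrow> 0 < \<epsilon> \<Longrightarrow> ereal (\<beta> - \<epsilon>) \<le> S"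
  shows "I \<le> S"
proof (rule dense_le)
  fix c
  assume "c < I"
  then obtain \<gamma> \<beta> where "c < ereal \<gamma>" "\<gamma> < \<beta>" "ereal \<beta> < I"
    by (metis ereal_dense2 less_ereal.simps(1))
  then show "c \<le> S"
    using assms[of \<beta> "\<beta> - \<gamma>"] by simp
qed

lemma SUP_INF_ge_of_concave_combination:
  fixes a :: "'x \<Rightarrow> 'y::real_vector \<Rightarrow> ereal"
  assumes "\<And>x. concave_ereal (\<lambda>y. a x y)" "0 \<le> t" "t \<le> 1"
    and "\<And>x. c \<le> ereal (1 - t) * a x y1 + ereal t * a x y2"
  shows "c \<le> (SUP y. INF x. a x y)"
proof -
  have "c \<le> a x ((1 - t) *\<^sub>R y1 + t *\<^sub>R y2)" for x
    using assms(1)[of x] assms(2,3) assms(4)[of x] unfolding concave_ereal_def by (blast intro: order_trans)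
  then have "c \<le> (INF x. a x ((1 - t) *\<^sub>R y1 + t *\<^sub>R y2))"
    by (rule INF_greatest)
  also have "\<dots> \<le> (SUP y. INF x. a x y)"
    by (rule SUP_upper) simp
  finally show ?thesis .
qed

theorem mainTheorem13:
  fixes a :: "'x::{real_inner,complete_space} \<Rightarrow> 'y::{real_inner,complete_space} \<Rightarrow> ereal"
  assumes no_minf: "\<And>x y. a x y \<noteq> -\<infinity>"
    and convx: "\<And>y. proper_lsc (\<lambda>x. a x y) \<and> phi_lsc_convex (\<lambda>x. a x y)"
    and concy: "\<And>x. concave_ereal (\<lambda>y. a x y)"
    and hyp: "\<And>\<beta> \<epsilon>. ereal \<beta> < (INF x. SUP y. a x y) \<Longrightarrow> \<epsilon> > 0 \<Longrightarrow>
        \<exists>y1 y2 xb. xb \<in> edom (\<lambda>x. a x y1) \<inter> edom (\<lambda>x. a x y2)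
          \<and> a xb y1 \<ge> ereal \<beta> \<and> a xb y2 \<ge> ereal \<beta>
          \<and> ZS \<epsilon> xb (\<lambda>x. a x y1) (\<lambda>x. a x y2)"
  shows "(SUP y. INF x. a x y) = (INF x. SUP y. a x y)"
proof (rule antisym)
  show "(SUP y. INF x. a x y) \<le> (INF x. SUP y. a x y)"
    by (intro SUP_least INF_greatest) (rule INF_lower2[OF UNIV_I], rule SUP_upper, simp)
next
  show "(INF x. SUP y. a x y) \<le> (SUP y. INF x. a x y)"
  proof (rule ereal_le_of_approx_from_below)
    fix \<beta> \<epsilon> :: real
    assume "ereal \<beta> < (INF x. SUP y. a x y)" "0 < \<epsilon>"
    then obtain y1 y2 xb where dom: "xb \<in> edom (\<lambda>x. a x y1) \<inter> edom (\<lambda>x. a x y2)"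
      and ge: "ereal \<beta> \<le> a xb y1" "ereal \<beta> \<le> a xb y2"
      and zs: "ZS \<epsilon> xb (\<lambda>x. a x y1) (\<lambda>x. a x y2)"
      using hyp by blast
    obtain F where F: "a xb y1 = ereal F"
      using dom no_minf[of xb y1] by (cases "a xb y1") (auto simp: edom_def)
    obtain G where G: "a xb y2 = ereal G"
      using dom no_minf[of xb y2] by (cases "a xb y2") (auto simp: edom_def)
    obtain t where t: "0 \<le> t" "t \<le> 1"
      and comb: "\<And>x. ereal ((1 - t) * F + t * G - \<epsilon>) \<le> ereal (1 - t) * a x y1 + ereal t * a x y2"
      using ZS_imp_convex_combination_ge[OF F G zs] by blast
    have "\<beta> \<le> (1 - t) * F + t * G"
      using ge F G t mult_left_mono[of \<beta> F "1 - t"] mult_left_mono[of \<beta> G t] by (simp add: algebra_simps)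
    then have "ereal (\<beta> - \<epsilon>) \<le> ereal (1 - t) * a x y1 + ereal t * a x y2" for x
      by (intro order_trans[OF _ comb]) simp
    then show "ereal (\<beta> - \<epsilon>) \<le> (SUP y. INF x. a x y)"
      by (rule SUP_INF_ge_of_concave_combination[OF concy t])
  qed
qed

end
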